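(* Let $\mathfrak{F}$ be any saturated formation of finite groups such that every group in $\mathfrak{F}$ is soluble and $\mathfrak{U}\subseteq\mathfrak{F}$, where $\mathfrak{U}$ is the class of all finite supersoluble groups. Then there exist a finite group $G$ and a normal subgroup $H$ of $G$ such that $G/H\in\mathfrak{F}$ and, for every maximal subgroup $M$ of $G$, the index $|\tilde{\mathrm{F}}(H):\tilde{\mathrm{F}}(H)\cap M|$ is equal to $1$ or to a prime, but $G\notin\mathfrak{F}$. In particular, this holds for $\mathfrak{F}=\mathfrak{U}$.
   Context: All groups are finite. A formation is a class of groups closed under homomorphic images and such that if $G/N_1$ and $G/N_2$ lie in it then so does $G/(N_1\cap N_2)$; it is saturated if $G/\Phi(G)\in\mathfrak{F}$ implies $G\in\mathfrak{F}$, where $\Phi(G)$ is the Frattini subgroup. For a group $X$, $\tilde{\mathrm{F}}(X)$ denotes the subgroup of $X$ containing $\Phi(X)$ defined by $\tilde{\mathrm{F}}(X)/\Phi(X)=\mathrm{Soc}(X/\Phi(X))$, the socle (product of all minimal normal subgroups) of $X/\Phi(X)$. *)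

theory Defs
  imports "HOL-Algebra.Algebra"
begin

definition maxsub :: "('a, 'b) monoid_scheme \<Rightarrow> 'a set \<Rightarrow> bool" where
  "maxsub G M \<equiv> subgroup M G \<and> M \<noteq> carrier G \<and>
     (\<forall>K. subgroup K G \<longrightarrow> M \<subseteq> K \<longrightarrow> K = M \<or> K = carrier G)"

definition frattini :: "('a, 'b) monoid_scheme \<Rightarrow> 'a set" where
  "frattini G \<equiv> carrier G \<inter> \<Inter>{M. maxsub G M}"

definition min_normal :: "('a, 'b) monoid_scheme \<Rightarrow> 'a set \<Rightarrow> bool" where
  "min_normal G N \<equiv> N \<lhd> G \<and> N \<noteq> {\<one>\<^bsub>G\<^esub>} \<and>
     (\<forall>K. K \<lhd> G \<longrightarrow> K \<subseteq> N \<longrightarrow> K = {\<one>\<^bsub>G\<^esub>} \<or> K = N)"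

definition socle :: "('a, 'b) monoid_scheme \<Rightarrow> 'a set" where
  "socle G \<equiv> generate G (\<Union>{N. min_normal G N})"

text \<open>\<open>tildeF X\<close>: the subgroup containing Phi(X) with
  tildeF(X)/Phi(X) = Soc(X/Phi(X)), i.e. the full preimage.\<close>
definition tildeF :: "('a, 'b) monoid_scheme \<Rightarrow> 'a set" where
  "tildeF Y \<equiv> {x \<in> carrier Y. r_coset Y (frattini Y) x \<in> socle (Y Mod frattini Y)}"

definition supersoluble :: "('a, 'b) monoid_scheme \<Rightarrow> bool" where
  "supersoluble G \<equiv> \<exists>(n::nat) (S :: nat \<Rightarrow> 'a set).
     S 0 = {\<one>\<^bsub>G\<^esub>} \<and> S n = carrier G \<and> (\<forall>i\<le>n. S i \<lhd> G) \<and>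
     (\<forall>i<n. S i \<subseteq> S (Suc i) \<and>
        cyclic_group ((G\<lparr>carrier := S (Suc i)\<rparr>) Mod (S i)))"

text \<open>Classes of finite groups are represented by predicates on groups with
  carrier in nat (every finite group is isomorphic to such a group); a group of
  arbitrary type belongs to the class if it is isomorphic to a member.\<close>
type_synonym grp = "nat monoid"

definition in_cls :: "(grp \<Rightarrow> bool) \<Rightarrow> ('a, 'b) monoid_scheme \<Rightarrow> bool" where
  "in_cls F G \<equiv> \<exists>K. F K \<and> G \<cong> K"

definition group_class :: "(grp \<Rightarrow> bool) \<Rightarrow> bool" where
  "group_class F \<equiv> (\<forall>K. F K \<longrightarrow> group K \<and> finite (carrier K))"

definition formation :: "(grp \<Rightarrow> bool) \<Rightarrow> bool" where
  "formation F \<equiv> group_class F \<and>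
     (\<forall>G K h. F G \<longrightarrow> group K \<longrightarrow> h \<in> hom G K \<longrightarrow> h ` carrier G = carrier K \<longrightarrow> F K) \<and>
     (\<forall>(G::grp) N1 N2. group G \<longrightarrow> finite (carrier G) \<longrightarrow> N1 \<lhd> G \<longrightarrow> N2 \<lhd> G \<longrightarrow>
        in_cls F (G Mod N1) \<longrightarrow> in_cls F (G Mod N2) \<longrightarrow> in_cls F (G Mod (N1 \<inter> N2)))"

definition saturated :: "(grp \<Rightarrow> bool) \<Rightarrow> bool" where
  "saturated F \<equiv> \<forall>G::grp. group G \<longrightarrow> finite (carrier G) \<longrightarrow>
     in_cls F (G Mod frattini G) \<longrightarrow> F G"

definition U_cls :: "grp \<Rightarrow> bool" where
  "U_cls K \<equiv> group K \<and> finite (carrier K) \<and> supersoluble K"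

definition counterexample_exists :: "(grp \<Rightarrow> bool) \<Rightarrow> bool" where
  "counterexample_exists F \<equiv> \<exists>(G::grp) H. group G \<and> finite (carrier G) \<and> H \<lhd> G \<and>
     in_cls F (G Mod H) \<and>
     (\<forall>M. maxsub G M \<longrightarrow>
        (let T = tildeF (G\<lparr>carrier := H\<rparr>) in
          card T div card (T \<inter> M) = 1 \<or> Factorial_Ring.prime (card T div card (T \<inter> M)))) \<and>
     \<not> in_cls F G"

end

theory Submission
  imports Defs
begin

text \<open>Let A6 act on F_2^6 by permuting coordinates, let V be the quotient by the all-ones
  vector and W the image of the even-weight vectors, and put G = V x| A6 and H = W x| A6, a
  subgroup of index 2. Then G/H = C_2 is supersoluble, hence lies in the formation, while G
  contains A6, is not soluble and so does not.

  A6 acts trivially on V/W but fixes no nonzero vector of V, so W has no A6-invariant complement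
  in V; as A6 is transitive on the nonzero vectors of W, this forces W into every maximal subgroup
  of G. In H the conjugates of A6 are maximal and, A6 being faithful on W, intersect trivially,
  so Phi(H) = 1; and W is self-centralizing in H, so it contains every minimal normal subgroup.
  Hence tildeF(H) <= W <= M for every maximal subgroup M of G, and every index in question is 1.\<close>

lemma (in group) inv_mult_cancel:
  "x \<in> carrier G \<Longrightarrow> y \<in> carrier G \<Longrightarrow> inv x \<otimes> (x \<otimes> y) = y"
  by (simp add: m_assoc[symmetric])

lemma (in group) commutator_one_imp_commute:
  "x \<in> carrier G \<Longrightarrow> y \<in> carrier G \<Longrightarrow> x \<otimes> y \<otimes> inv x \<otimes> inv y = \<one> \<Longrightarrow>
    x \<otimes> y = y \<otimes> x"
  by (simp add: inv_solve_right')

text \<open>The construction \<^const>\<open>flatten\<close> of \<^theory>\<open>HOL-Algebra.Coset\<close>, for carriers of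
  arbitrary type.\<close>
definition relabel :: "('a, 'b) monoid_scheme \<Rightarrow> ('a \<Rightarrow> 'c) \<Rightarrow> 'c monoid" where
  "relabel G f = \<lparr>carrier = f ` carrier G,
     monoid.mult =
       (\<lambda>x y. f (the_inv_into (carrier G) f x \<otimes>\<^bsub>G\<^esub> the_inv_into (carrier G) f y)),
     one = f \<one>\<^bsub>G\<^esub>\<rparr>"

lemma group_relabel:
  assumes "group G" "inj_on f (carrier G)"
  shows "group (relabel G f)"
proof (rule groupI)
  fix x y
  assume "x \<in> carrier (relabel G f)" and "y \<in> carrier (relabel G f)"
  then show "x \<otimes>\<^bsub>relabel G f\<^esub> y \<in> carrier (relabel G f)"
    using assms group.surj_const_mult the_inv_into_f_f by (fastforce simp: relabel_def)
next
  show "\<one>\<^bsub>relabel G f\<^esub> \<in> carrier (relabel G f)"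
    unfolding relabel_def by (simp add: assms group.is_monoid)
next
  fix x y z
  assume "x \<in> carrier (relabel G f)" "y \<in> carrier (relabel G f)"
    and "z \<in> carrier (relabel G f)"
  then show "x \<otimes>\<^bsub>relabel G f\<^esub> y \<otimes>\<^bsub>relabel G f\<^esub> z =
      x \<otimes>\<^bsub>relabel G f\<^esub> (y \<otimes>\<^bsub>relabel G f\<^esub> z)"
    by (auto simp: assms relabel_def group.is_monoid monoid.m_assoc monoid.m_closed
        the_inv_into_f_f)
next
  fix x
  assume x: "x \<in> carrier (relabel G f)"
  then show "\<one>\<^bsub>relabel G f\<^esub> \<otimes>\<^bsub>relabel G f\<^esub> x = x"
    by (auto simp: assms group.is_monoid the_inv_into_f_f relabel_def)
  have "\<exists>y\<in>carrier G. f (y \<otimes>\<^bsub>G\<^esub> z) = f \<one>\<^bsub>G\<^esub>" if "z \<in> carrier G" for z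
    by (metis \<open>group G\<close> group.l_inv_ex that)
  with assms x
  show "\<exists>y\<in>carrier (relabel G f). y \<otimes>\<^bsub>relabel G f\<^esub> x = \<one>\<^bsub>relabel G f\<^esub>"
    by (auto simp: relabel_def the_inv_into_f_f)
qed

lemma relabel_iso:
  assumes "group G" "inj_on f (carrier G)"
  shows "f \<in> iso G (relabel G f)"
  using assms
  by (auto simp: iso_def hom_def bij_betw_def relabel_def the_inv_into_f_f group.is_monoid
      monoid.m_closed)

lemma (in group) iso_nat_group:
  assumes "finite (carrier G)"
  obtains f and K :: grp where "group K" "finite (carrier K)" "f \<in> iso G K"
proof -
  obtain n and f :: "'a \<Rightarrow> nat" where "f ` carrier G = {..<n}" "inj_on f (carrier G)"
    using finite_imp_inj_to_nat_seg[OF assms] by blast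
  then show thesis
    using that group_relabel relabel_iso is_group assms
    by (metis relabel_def partial_object.select_convs(1) finite_imageI)
qed

lemma (in group) maxsub_conjugate:
  assumes M: "maxsub G M" and g: "g \<in> carrier G"
  shows "maxsub G (g <# M #> inv g)"
proof -
  have M_sub: "subgroup M G" and M_proper: "M \<noteq> carrier G"
    and M_max: "\<And>K. subgroup K G \<Longrightarrow> M \<subseteq> K \<Longrightarrow> K = M \<or> K = carrier G"
    using M unfolding maxsub_def by auto
  have conj_mono: "K \<subseteq> L \<Longrightarrow> x <# K #> y \<subseteq> x <# L #> y" for K L x y
    unfolding l_coset_def r_coset_def by blast
  have conj_back: "inv g <# (g <# K #> inv g) #> g = K" if "K \<subseteq> carrier G" for K
    using subgroup_conjugation_is_surj0[of "inv g" K] g that by simp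
  have conj_carrier: "g <# carrier G #> inv g = carrier G"
  proof
    show "g <# carrier G #> inv g \<subseteq> carrier G"
      using subgroup.subset[OF subgroup_conjugation_is_surj2[OF g subgroup_self]] .
    have "inv g <# carrier G #> g \<subseteq> carrier G"
      using subgroup.subset[OF subgroup_conjugation_is_surj1[OF g subgroup_self]] .
    then have "g <# (inv g <# carrier G #> g) #> inv g \<subseteq> g <# carrier G #> inv g"
      by (rule conj_mono)
    then show "carrier G \<subseteq> g <# carrier G #> inv g"
      using subgroup_conjugation_is_surj0[OF g subset_refl] by simp
  qed
  show ?thesis
    unfolding maxsub_def
  proof (intro conjI allI impI)
    show "subgroup (g <# M #> inv g) G" by (rule subgroup_conjugation_is_surj2[OF g M_sub])
    show "g <# M #> inv g \<noteq> carrier G"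
      using subgroup_conjugation_is_inj[OF g subgroup.subset[OF M_sub], of "carrier G"] conj_carrier M_proper
      by auto
  next
    fix K assume K: "subgroup K G" and MK: "g <# M #> inv g \<subseteq> K"
    have "M \<subseteq> inv g <# K #> g"
      using conj_mono[OF MK, of "inv g" g] conj_back[OF subgroup.subset[OF M_sub]] by simp
    then have "inv g <# K #> g = M \<or> inv g <# K #> g = carrier G"
      by (rule M_max[OF subgroup_conjugation_is_surj1[OF g K]])
    moreover have "g <# (inv g <# K #> g) #> inv g = K"
      using subgroup_conjugation_is_surj0[OF g subgroup.subset[OF K]] .
    ultimately show "K = g <# M #> inv g \<or> K = carrier G"
      using conj_carrier by force
  qed
qed

lemma (in group) normal_set_mult_maxsub:
  assumes N: "N \<lhd> G" and M: "maxsub G M" and "\<not> N \<subseteq> M"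
  shows "N <#> M = carrier G"
proof -
  have M_sub: "subgroup M G" and M_max: "\<And>K. subgroup K G \<Longrightarrow> M \<subseteq> K \<Longrightarrow> K = M \<or> K = carrier G"
    using M unfolding maxsub_def by auto
  have N_sub: "subgroup N G" using N by (rule normal_imp_subgroup)
  have "M \<subseteq> N <#> M"
    using subgroup.one_closed[OF N_sub] subgroup.subset[OF M_sub] unfolding set_mult_def by force
  moreover have "N \<subseteq> N <#> M"
    using subgroup.one_closed[OF M_sub] subgroup.subset[OF N_sub] unfolding set_mult_def by force
  ultimately show ?thesis
    using M_max[OF mult_norm_subgroup[OF N M_sub]] \<open>\<not> N \<subseteq> M\<close> by blast
qed

lemma (in group) min_normal_subset_self_centralizing:
  assumes N: "N \<lhd> G"
    and centralizer: "\<And>x. x \<in> carrier G \<Longrightarrow> (\<forall>n\<in>N. x \<otimes> n = n \<otimes> x) \<Longrightarrow> x \<in> N"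
    and K: "min_normal G K"
  shows "K \<subseteq> N"
proof -
  have K_normal: "K \<lhd> G" and K_nontrivial: "K \<noteq> {\<one>}"
    and K_min: "\<And>L. L \<lhd> G \<Longrightarrow> L \<subseteq> K \<Longrightarrow> L = {\<one>} \<or> L = K"
    using K unfolding min_normal_def by auto
  interpret K: normal K G by (rule K_normal)
  interpret N: normal N G by (rule N)
  have "K \<inter> N = {\<one>} \<or> K \<inter> N = K"
    using K_min normal_subgroup_intersect[OF K_normal N] by blast
  moreover have False if trivial: "K \<inter> N = {\<one>}"
  proof -
    have "k \<in> N" if k: "k \<in> K" for k
    proof (rule centralizer)
      show k_carrier: "k \<in> carrier G" using k K.subset by blast
      show "\<forall>n\<in>N. k \<otimes> n = n \<otimes> k"
      proof
        fix n assume n: "n \<in> N"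
        have n_carrier: "n \<in> carrier G" using n N.subset by blast
        have "k \<otimes> n \<otimes> inv k \<otimes> inv n \<in> N"
          using N.inv_op_closed2[OF k_carrier n] n by blast
        moreover have "k \<otimes> (n \<otimes> inv k \<otimes> inv n) \<in> K"
          using K.inv_op_closed2[OF n_carrier K.m_inv_closed[OF k]] k by (simp add: inv_inv n_carrier)
        ultimately have "k \<otimes> n \<otimes> inv k \<otimes> inv n = \<one>"
          using trivial k_carrier n_carrier by (auto simp: m_assoc)
        then show "k \<otimes> n = n \<otimes> k"
          using k_carrier n_carrier by (rule commutator_one_imp_commute[rotated 2])
      qed
    qed
    then have "K \<subseteq> K \<inter> N" by blast
    then show False using trivial K_nontrivial by blast
  qed
  ultimately show ?thesis by blast
qed

lemma (in group) socle_subset_self_centralizing: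
  assumes "N \<lhd> G"
    and "\<And>x. x \<in> carrier G \<Longrightarrow> (\<forall>n\<in>N. x \<otimes> n = n \<otimes> x) \<Longrightarrow> x \<in> N"
  shows "socle G \<subseteq> N"
  unfolding socle_def
  using min_normal_subset_self_centralizing[OF assms] normal_imp_subgroup[OF assms(1)]
  by (intro generate_subgroup_incl) auto

lemma (in group) carrier_Mod_one: "carrier (G Mod {\<one>}) = (\<lambda>x. {x}) ` carrier G"
  unfolding FactGroup_def RCOSETS_def r_coset_def by auto

lemma (in group) singleton_iso_Mod_one: "(\<lambda>x. {x}) \<in> iso G (G Mod {\<one>})"
  by (auto simp: iso_def hom_def bij_betw_def inj_on_def carrier_Mod_one set_mult_def)

lemma iso_solvable:
  assumes "G \<cong> K" "group G" "group K" "solvable K"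
  shows "solvable G"
proof -
  obtain h where h: "h \<in> iso G K" using assms(1) unfolding is_iso_def by blast
  then have "group_hom G K h"
    using assms(2,3) unfolding group_hom_def group_hom_axioms_def iso_def by blast
  moreover have "inj_on h (carrier G)" using h unfolding iso_def bij_betw_def by blast
  ultimately show ?thesis using group_hom.inj_hom_imp_solvable assms(4) by blast
qed

lemma iso_FactGroup_kernel:
  assumes phi: "group_hom G C \<phi>" and phi_onto: "\<phi> ` carrier G = carrier C"
    and f: "f \<in> iso G K" and K: "group K"
  shows "f ` kernel G C \<phi> \<lhd> K" and "K Mod (f ` kernel G C \<phi>) \<cong> C"
proof -
  interpret phi: group_hom G C \<phi> by (rule phi)
  define \<psi> where "\<psi> = \<phi> \<circ> inv_into (carrier G) f"
  have f_inv: "inv_into (carrier G) f \<in> iso K G" by (rule phi.G.iso_set_sym[OF f])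
  have f_bij: "bij_betw f (carrier G) (carrier K)" using f unfolding iso_def by blast
  interpret psi: group_hom K C \<psi>
    unfolding group_hom_def group_hom_axioms_def \<psi>_def
    using K phi.H.is_group hom_compose[OF iso_imp_homomorphism[OF f_inv] phi.homh] by blast
  have "\<psi> ` carrier K = carrier C"
    using bij_betw_imp_surj_on[OF bij_betw_inv_into[OF f_bij]] phi_onto
    unfolding \<psi>_def image_comp[symmetric] by simp
  moreover have "kernel K C \<psi> = f ` kernel G C \<phi>"
    using f_bij unfolding kernel_def \<psi>_def bij_betw_def
    by (auto simp: inv_into_f_f image_iff) (metis f_inv_into_f inv_into_into)
  ultimately show "f ` kernel G C \<phi> \<lhd> K" and "K Mod (f ` kernel G C \<phi>) \<cong> C"
    using psi.normal_kernel psi.FactGroup_iso by auto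
qed

lemma supersoluble_imp_solvable:
  assumes K: "group K" and ss: "supersoluble K"
  shows "solvable K"
proof -
  interpret K: group K by (rule K)
  obtain n S where S: "S 0 = {\<one>\<^bsub>K\<^esub>}" "S n = carrier K" "\<forall>i\<le>n. S i \<lhd> K"
    "\<forall>i<n. S i \<subseteq> S (Suc i) \<and> cyclic_group ((K\<lparr>carrier := S (Suc i)\<rparr>) Mod (S i))"
    using ss unfolding supersoluble_def by blast
  have "solvable_seq K (S i)" if "i \<le> n" for i
    using that
  proof (induction i)
    case 0
    then show ?case using S(1) solvable_seq.unity by simp
  next
    case (Suc i)
    have sub: "subgroup (S (Suc i)) K" using S(3) Suc.prems normal_imp_subgroup by blast
    have incl: "S i \<subseteq> S (Suc i)" and cyc: "cyclic_group ((K\<lparr>carrier := S (Suc i)\<rparr>) Mod (S i))"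
      using S(4) Suc.prems by auto
    have normal: "S i \<lhd> K\<lparr>carrier := S (Suc i)\<rparr>"
      using K.normal_restrict_supergroup[OF sub _ incl] S(3) Suc.prems by simp
    have "comm_group ((K\<lparr>carrier := S (Suc i)\<rparr>) Mod (S i))"
      by (rule group.cyclic_imp_abelian_group[OF normal.factorgroup_is_group[OF normal] cyc])
    then show ?case using solvable_seq.extension[OF Suc.IH[OF Suc_leD[OF Suc.prems]] normal sub] by blast
  qed
  then show ?thesis using S(2) unfolding solvable_def by (metis order_refl)
qed

lemma cyclic_imp_supersoluble:
  fixes G (structure)
  assumes G: "group G" and cyclic: "cyclic_group G"
  shows "supersoluble G"
proof -
  interpret group G by (rule G)
  have "G \<cong> G Mod {\<one>}" using singleton_iso_Mod_one unfolding is_iso_def by blast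
  then have "cyclic_group (G Mod {\<one>})"
    using cyclic isomorphic_group_cyclicity normal.factorgroup_is_group[OF one_is_normal] G by blast
  then show ?thesis
    unfolding supersoluble_def
    using one_is_normal normal_self
    by (intro exI[of _ "1::nat"] exI[of _ "\<lambda>i::nat. if i = 0 then {\<one>} else carrier G"]) auto
qed

section \<open>Split extensions of a uniserial module\<close>

text \<open>\<open>G = V \<rtimes> A\<close> and \<open>H = W \<rtimes> A\<close> for \<open>A\<close>-modules \<open>W \<subset> V\<close>, written multiplicatively.\<close>
locale uniserial_semidirect = group G for G (structure) +
  fixes V W A H :: "'a set"
  assumes subgroup_V: "subgroup V G"
    and subgroup_W: "subgroup W G"
    and subgroup_A: "subgroup A G"
    and subgroup_H: "subgroup H G"
    and W_psubset_V: "W \<subset> V"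
    and W_nontrivial: "W \<noteq> {\<one>}"
    and V_comm: "x \<in> V \<Longrightarrow> y \<in> V \<Longrightarrow> x \<otimes> y = y \<otimes> x"
    and A_Int_V: "A \<inter> V = {\<one>}"
    and V_mult_A: "V <#> A = carrier G"
    and H_eq: "H = W <#> A"
    and commutator_A_V: "a \<in> A \<Longrightarrow> v \<in> V \<Longrightarrow> a \<otimes> v \<otimes> inv a \<otimes> inv v \<in> W"
    and A_transitive_on_W:
      "w \<in> W \<Longrightarrow> u \<in> W \<Longrightarrow> w \<noteq> \<one> \<Longrightarrow> u \<noteq> \<one> \<Longrightarrow> \<exists>a\<in>A. a \<otimes> w \<otimes> inv a = u"
    and A_faithful_on_W: "a \<in> A \<Longrightarrow> \<forall>w\<in>W. a \<otimes> w = w \<otimes> a \<Longrightarrow> a = \<one>"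
    and V_no_A_fixed_points: "v \<in> V \<Longrightarrow> \<forall>a\<in>A. a \<otimes> v = v \<otimes> a \<Longrightarrow> v = \<one>"
begin

sublocale V: subgroup V G by (rule subgroup_V)
sublocale W: subgroup W G by (rule subgroup_W)
sublocale A: subgroup A G by (rule subgroup_A)
sublocale H: subgroup H G by (rule subgroup_H)

lemma W_subset_V: "W \<subseteq> V"
  using W_psubset_V by blast

lemma conj_by_A_in_V:
  assumes a: "a \<in> A" and v: "v \<in> V"
  shows "\<exists>u\<in>W. a \<otimes> v \<otimes> inv a = u \<otimes> v"
proof
  show "a \<otimes> v \<otimes> inv a = (a \<otimes> v \<otimes> inv a \<otimes> inv v) \<otimes> v"
    using a v by (simp add: m_assoc)
qed (rule commutator_A_V[OF a v])

lemma conj_W_by_A: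
  assumes a: "a \<in> A" and w: "w \<in> W"
  shows "a \<otimes> w \<otimes> inv a \<in> W"
proof -
  obtain u where "u \<in> W" "a \<otimes> w \<otimes> inv a = u \<otimes> w"
    using conj_by_A_in_V[OF a] w W_subset_V by blast
  then show ?thesis using W.m_closed w by simp
qed

lemma conj_V_by_A:
  assumes a: "a \<in> A" and v: "v \<in> V"
  shows "a \<otimes> v \<otimes> inv a \<in> V"
proof -
  obtain u where "u \<in> W" "a \<otimes> v \<otimes> inv a = u \<otimes> v"
    using conj_by_A_in_V[OF a v] by blast
  then show ?thesis using V.m_closed v W_subset_V by auto
qed

lemma conj_in_V: "v \<in> V \<Longrightarrow> x \<in> V \<Longrightarrow> v \<otimes> x \<otimes> inv v = x"
  using V_comm[of v x] by (simp add: m_assoc)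

lemma conj_by_V_mult:
  assumes "v \<in> V" "y \<in> carrier G" "x \<in> carrier G" "y \<otimes> x \<otimes> inv y \<in> V"
  shows "(v \<otimes> y) \<otimes> x \<otimes> inv (v \<otimes> y) = y \<otimes> x \<otimes> inv y"
proof -
  have "(v \<otimes> y) \<otimes> x \<otimes> inv (v \<otimes> y) = v \<otimes> (y \<otimes> x \<otimes> inv y) \<otimes> inv v"
    using assms by (simp add: m_assoc inv_mult_group)
  then show ?thesis using conj_in_V assms(1,4) by simp
qed

lemma normal_if_A_invariant:
  assumes N: "subgroup N G" "N \<subseteq> V" and invariant: "\<And>a x. a \<in> A \<Longrightarrow> x \<in> N \<Longrightarrow> a \<otimes> x \<otimes> inv a \<in> N"
  shows "N \<lhd> G"
proof (rule normal_invI[OF N(1)])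
  fix g x assume g: "g \<in> carrier G" and x: "x \<in> N"
  obtain v a where va: "v \<in> V" "a \<in> A" "g = v \<otimes> a"
    using g V_mult_A[symmetric] unfolding set_mult_def by blast
  have "a \<otimes> x \<otimes> inv a \<in> N" by (rule invariant[OF va(2) x])
  moreover have "x \<in> carrier G" using x subgroup.mem_carrier[OF N(1)] by blast
  ultimately show "g \<otimes> x \<otimes> inv g \<in> N"
    using conj_by_V_mult[OF va(1) A.mem_carrier[OF va(2)]] va(3) N(2) by auto
qed

lemma W_normal: "W \<lhd> G"
  by (rule normal_if_A_invariant[OF subgroup_W W_subset_V conj_W_by_A])

lemma V_normal: "V \<lhd> G"
  by (rule normal_if_A_invariant[OF subgroup_V order_refl conj_V_by_A])

text \<open>Transitivity of \<open>A\<close> on the nonidentity elements makes \<open>W\<close> irreducible.\<close>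
lemma W_subset_if_A_invariant:
  assumes K: "subgroup K G"
    and invariant: "\<And>a k. a \<in> A \<Longrightarrow> k \<in> K \<Longrightarrow> a \<otimes> k \<otimes> inv a \<in> K"
    and nontrivial: "K \<inter> W \<noteq> {\<one>}"
  shows "W \<subseteq> K"
proof
  obtain x where x: "x \<in> K" "x \<in> W" "x \<noteq> \<one>"
    using nontrivial subgroup.one_closed[OF K] W.one_closed by blast
  fix u assume u: "u \<in> W"
  show "u \<in> K"
  proof (cases "u = \<one>")
    case True
    then show ?thesis using subgroup.one_closed[OF K] by simp
  next
    case False
    then obtain a where "a \<in> A" "a \<otimes> x \<otimes> inv a = u" using A_transitive_on_W x u by blast
    then show ?thesis using invariant x(1) by blast
  qed
qed

text \<open>Otherwise \<open>G = WM\<close>, so \<open>M \<inter> V\<close> is normal and meets \<open>W\<close> trivially; an element of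
  \<open>M \<inter> V\<close> outside \<open>W\<close> then commutes with \<open>A\<close> modulo \<open>M \<inter> W = 1\<close>.\<close>
lemma maxsub_contains_W:
  assumes M: "maxsub G M"
  shows "W \<subseteq> M"
proof (rule ccontr)
  assume W_not_M: "\<not> W \<subseteq> M"
  have M_sub: "subgroup M G" using M unfolding maxsub_def by blast
  interpret M: subgroup M G by (rule M_sub)
  have WM: "W <#> M = carrier G" by (rule normal_set_mult_maxsub[OF W_normal M W_not_M])
  have MV_invariant: "g \<otimes> x \<otimes> inv g \<in> M \<inter> V" if g: "g \<in> carrier G" and x: "x \<in> M \<inter> V" for g x
  proof -
    obtain w m where wm: "w \<in> W" "m \<in> M" "g = w \<otimes> m"
      using g WM[symmetric] unfolding set_mult_def by blast
    have mx: "m \<otimes> x \<otimes> inv m \<in> M \<inter> V"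
      using x wm(2) normal.inv_op_closed2[OF V_normal] by auto
    then show ?thesis
      using conj_by_V_mult[of w m x] wm x W_subset_V V.mem_carrier by auto
  qed
  have "M \<inter> W = {\<one>}"
  proof (rule ccontr)
    assume "M \<inter> W \<noteq> {\<one>}"
    then have "W \<subseteq> M \<inter> V"
      using W_subset_V MV_invariant A.mem_carrier
      by (intro W_subset_if_A_invariant subgroups_Inter_pair M_sub subgroup_V) auto
    then show False using W_not_M by blast
  qed
  obtain v where v: "v \<in> V" "v \<notin> W" using W_psubset_V by blast
  then obtain w m where wm: "w \<in> W" "m \<in> M" "v = w \<otimes> m"
    using WM V.mem_carrier unfolding set_mult_def by blast
  have "m = inv w \<otimes> v"
    using wm v W.mem_carrier M.mem_carrier V.mem_carrier by (simp add: inv_solve_left)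
  then have mV: "m \<in> V" using wm(1) v(1) W_subset_V by auto
  have m_notin_W: "m \<notin> W" using wm v W.m_closed by auto
  have "a \<otimes> m = m \<otimes> a" if a: "a \<in> A" for a
  proof (rule commutator_one_imp_commute)
    have "a \<otimes> m \<otimes> inv a \<otimes> inv m \<in> M"
      using MV_invariant[OF A.mem_carrier[OF a], of m] mV wm(2) by auto
    then show "a \<otimes> m \<otimes> inv a \<otimes> inv m = \<one>"
      using \<open>M \<inter> W = {\<one>}\<close> commutator_A_V[OF a mV] by blast
  qed (use a mV in auto)
  then have "m = \<one>" using V_no_A_fixed_points[OF mV] by blast
  then show False using m_notin_W W.one_closed by simp
qed

abbreviation GH where "GH \<equiv> G\<lparr>carrier := H\<rparr>"

lemma group_GH: "group GH"
  by (rule subgroup.subgroup_is_group[OF subgroup_H is_group])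

lemma W_subset_H: "W \<subseteq> H"
proof
  fix w assume w: "w \<in> W"
  have "w \<otimes> \<one> \<in> W <#> A" unfolding set_mult_def using w A.one_closed by blast
  then show "w \<in> H" using w H_eq by simp
qed

lemma A_subset_H: "A \<subseteq> H"
proof
  fix a assume a: "a \<in> A"
  have "\<one> \<otimes> a \<in> W <#> A" unfolding set_mult_def using a W.one_closed by blast
  then show "a \<in> H" using a H_eq by simp
qed

lemma A_maxsub_H: "maxsub GH A"
  unfolding maxsub_def
proof (intro conjI allI impI)
  show "subgroup A GH" by (rule subgroup_incl[OF subgroup_A subgroup_H A_subset_H])
  obtain w where w: "w \<in> W" "w \<noteq> \<one>" using W_nontrivial W.one_closed by blast
  then have "w \<notin> A" using A_Int_V W_subset_V by blast
  then show "A \<noteq> carrier GH" using w W_subset_H by auto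
next
  fix K assume K: "subgroup K GH" and AK: "A \<subseteq> K"
  have K_sub: "subgroup K G" by (rule incl_subgroup[OF subgroup_H K])
  interpret K: subgroup K G by (rule K_sub)
  have KH: "K \<subseteq> H" using subgroup.subset[OF K] by simp
  show "K = A \<or> K = carrier GH"
  proof (cases "K \<inter> W = {\<one>}")
    case True
    have "K \<subseteq> A"
    proof
      fix k assume k: "k \<in> K"
      then obtain w a where wa: "w \<in> W" "a \<in> A" "k = w \<otimes> a"
        using KH unfolding H_eq set_mult_def by blast
      have "w = k \<otimes> inv a" using wa by (simp add: m_assoc)
      then have "w \<in> K" using k AK wa(2) by auto
      then have "w = \<one>" using True wa(1) by blast
      then show "k \<in> A" using wa by simp
    qed
    then show ?thesis using AK by blast
  next
    case False
    have "W \<subseteq> K"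
      using AK by (intro W_subset_if_A_invariant[OF K_sub _ False]) auto
    then have "H \<subseteq> K" using AK unfolding H_eq set_mult_def by auto
    then show ?thesis using KH by auto
  qed
qed

lemma conj_A_maxsub_H:
  assumes "w \<in> W"
  shows "maxsub GH (w <# A #> inv w)"
  using group.maxsub_conjugate[OF group_GH A_maxsub_H, of w] assms W_subset_H subgroup_H
  by (auto simp: l_coset_def r_coset_def)

text \<open>An element of every conjugate \<open>w A w\<^sup>-\<^sup>1\<close> centralizes \<open>W\<close>.\<close>
lemma frattini_H: "frattini GH = {\<one>}"
proof
  show "frattini GH \<subseteq> {\<one>}"
  proof
    fix x assume x: "x \<in> frattini GH"
    have in_conj: "\<exists>b\<in>A. x = w \<otimes> b \<otimes> inv w" if "w \<in> W" for w
      using x conj_A_maxsub_H[OF that] unfolding frattini_def l_coset_def r_coset_def by blast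
    obtain b where "b \<in> A" "x = \<one> \<otimes> b \<otimes> inv \<one>" using in_conj W.one_closed by blast
    then have xA: "x \<in> A" by simp
    have "x \<otimes> w = w \<otimes> x" if w: "w \<in> W" for w
    proof -
      obtain b where b: "b \<in> A" "x = w \<otimes> b \<otimes> inv w" using in_conj[OF w] by blast
      have "b \<otimes> inv x = inv w \<otimes> (x \<otimes> w \<otimes> inv x)"
        using b w by (simp add: m_assoc inv_mult_group inv_mult_cancel)
      also have "\<dots> \<in> W" using conj_W_by_A[OF xA w] w by simp
      finally have "b \<otimes> inv x = \<one>" using A_Int_V W_subset_V b(1) xA by blast
      then have "b = x" using b(1) xA by (simp add: inv_solve_right')
      moreover have "x \<otimes> w = w \<otimes> b" using b w by (simp add: m_assoc)
      ultimately show ?thesis by simp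
    qed
    then show "x \<in> {\<one>}" using A_faithful_on_W[OF xA] by simp
  qed
  show "{\<one>} \<subseteq> frattini GH"
    unfolding frattini_def maxsub_def using H.one_closed by (auto dest: subgroup.one_closed)
qed

lemma W_self_centralizing_in_H:
  assumes x: "x \<in> H" and comm: "\<forall>w\<in>W. x \<otimes> w = w \<otimes> x"
  shows "x \<in> W"
proof -
  obtain u a where ua: "u \<in> W" "a \<in> A" "x = u \<otimes> a"
    using x unfolding H_eq set_mult_def by blast
  have "a \<otimes> w = w \<otimes> a" if w: "w \<in> W" for w
  proof -
    have "u \<otimes> (a \<otimes> w) = u \<otimes> (w \<otimes> a)"
      using comm w ua V_comm[of w u] W_subset_V by (auto simp: m_assoc[symmetric])
    then show ?thesis using ua w by simp
  qed
  then have "a = \<one>" using A_faithful_on_W ua(2) by blast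
  then show ?thesis using ua by simp
qed

lemma socle_H_Mod_one: "socle (GH Mod {\<one>}) \<subseteq> (\<lambda>x. {x}) ` W"
proof -
  interpret GH: group GH by (rule group_GH)
  have Q: "group (GH Mod {\<one>})" using normal.factorgroup_is_group GH.one_is_normal by simp
  have "W \<lhd> GH" by (rule normal_restrict_supergroup[OF subgroup_H W_normal W_subset_H])
  then have normal: "(\<lambda>x. {x}) ` W \<lhd> GH Mod {\<one>}"
    using iso_normal_subgroup GH.singleton_iso_Mod_one group_GH Q by fastforce
  show ?thesis
  proof (rule group.socle_subset_self_centralizing[OF Q normal])
    fix q assume q: "q \<in> carrier (GH Mod {\<one>})"
      and comm: "\<forall>n\<in>(\<lambda>x. {x}) ` W. q \<otimes>\<^bsub>GH Mod {\<one>}\<^esub> n = n \<otimes>\<^bsub>GH Mod {\<one>}\<^esub> q"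
    obtain x where x: "x \<in> H" "q = {x}" using q GH.carrier_Mod_one by auto
    have "\<forall>w\<in>W. x \<otimes> w = w \<otimes> x" using comm x by (simp add: set_mult_def)
    then show "q \<in> (\<lambda>x. {x}) ` W" using W_self_centralizing_in_H x by blast
  qed
qed

lemma tildeF_H_subset_W: "tildeF GH \<subseteq> W"
proof
  fix x assume "x \<in> tildeF GH"
  then have "{x} \<in> socle (GH Mod {\<one>})"
    unfolding tildeF_def frattini_H r_coset_def by auto
  then show "x \<in> W" using socle_H_Mod_one by auto
qed

lemma one_in_tildeF_H: "\<one> \<in> tildeF GH"
  unfolding tildeF_def frattini_H socle_def r_coset_def
  using H.one_closed generate.one[of "GH Mod {\<one>}"] by simp

lemma tildeF_H_index_one:
  assumes "finite (carrier G)" and "maxsub G M"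
  shows "card (tildeF GH) div card (tildeF GH \<inter> M) = 1"
proof -
  have "tildeF GH \<inter> M = tildeF GH"
    using tildeF_H_subset_W maxsub_contains_W[OF assms(2)] by blast
  moreover have "finite (tildeF GH)"
    using finite_subset[OF _ assms(1)] tildeF_H_subset_W W.subset by blast
  moreover have "tildeF GH \<noteq> {}" using one_in_tildeF_H by blast
  ultimately show ?thesis by simp
qed

end

locale uniserial_semidirect_iso = uniserial_semidirect +
  fixes f :: "'a \<Rightarrow> 'c" and K :: "('c, 'd) monoid_scheme"
  assumes f_iso: "f \<in> iso G K" and group_K: "group K"
begin

sublocale f: group_hom G K f
  using f_iso group_K is_group unfolding group_hom_def group_hom_axioms_def iso_def by blast

lemma f_inj_eq: "x \<in> carrier G \<Longrightarrow> y \<in> carrier G \<Longrightarrow> f x = f y \<longleftrightarrow> x = y"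
  using f_iso unfolding iso_def bij_betw_def by (auto dest: inj_onD)

lemma image_W_nontrivial: "f ` W \<noteq> {\<one>\<^bsub>K\<^esub>}"
proof
  assume trivial: "f ` W = {\<one>\<^bsub>K\<^esub>}"
  have "W \<subseteq> {\<one>}"
  proof
    fix w assume w: "w \<in> W"
    then have "f w = f \<one>" using trivial by auto
    then show "w \<in> {\<one>}" using f_inj_eq[of w \<one>] w W.mem_carrier by simp
  qed
  then show False using W_nontrivial W.one_closed by blast
qed

lemma image_V_comm:
  assumes xy: "x \<in> f ` V" "y \<in> f ` V"
  shows "x \<otimes>\<^bsub>K\<^esub> y = y \<otimes>\<^bsub>K\<^esub> x"
proof -
  obtain v where v: "x = f v" "v \<in> V" using xy(1) by (rule imageE)
  obtain v' where v': "y = f v'" "v' \<in> V" using xy(2) by (rule imageE)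
  have "f (v \<otimes> v') = f (v' \<otimes> v)" using V_comm[OF v(2) v'(2)] by (rule arg_cong)
  then show ?thesis using v v' V.mem_carrier by simp
qed

lemma image_commutator_A_V:
  assumes av: "a \<in> f ` A" "v \<in> f ` V"
  shows "a \<otimes>\<^bsub>K\<^esub> v \<otimes>\<^bsub>K\<^esub> inv\<^bsub>K\<^esub> a \<otimes>\<^bsub>K\<^esub> inv\<^bsub>K\<^esub> v \<in> f ` W"
proof -
  obtain a' where a': "a = f a'" "a' \<in> A" using av(1) by (rule imageE)
  obtain v' where v': "v = f v'" "v' \<in> V" using av(2) by (rule imageE)
  have "f (a' \<otimes> v' \<otimes> inv a' \<otimes> inv v') \<in> f ` W"
    by (rule imageI[OF commutator_A_V[OF a'(2) v'(2)]])
  then show ?thesis using a' v' A.mem_carrier V.mem_carrier by simp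
qed

lemma image_A_transitive_on_W:
  assumes wu: "w \<in> f ` W" "u \<in> f ` W" and nontrivial: "w \<noteq> \<one>\<^bsub>K\<^esub>" "u \<noteq> \<one>\<^bsub>K\<^esub>"
  shows "\<exists>a\<in>f ` A. a \<otimes>\<^bsub>K\<^esub> w \<otimes>\<^bsub>K\<^esub> inv\<^bsub>K\<^esub> a = u"
proof -
  obtain w' where w': "w = f w'" "w' \<in> W" using wu(1) by (rule imageE)
  obtain u' where u': "u = f u'" "u' \<in> W" using wu(2) by (rule imageE)
  have "w' \<noteq> \<one>" "u' \<noteq> \<one>" using nontrivial w' u' by auto
  then obtain a where a: "a \<in> A" "a \<otimes> w' \<otimes> inv a = u'"
    using A_transitive_on_W w'(2) u'(2) by blast
  have "f a \<otimes>\<^bsub>K\<^esub> w \<otimes>\<^bsub>K\<^esub> inv\<^bsub>K\<^esub> (f a) = f (a \<otimes> w' \<otimes> inv a)"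
    using w' a(1) A.mem_carrier W.mem_carrier by simp
  then show ?thesis using a u'(1) by blast
qed

lemma image_A_faithful_on_W:
  assumes a: "a \<in> f ` A" and comm: "\<forall>w\<in>f ` W. a \<otimes>\<^bsub>K\<^esub> w = w \<otimes>\<^bsub>K\<^esub> a"
  shows "a = \<one>\<^bsub>K\<^esub>"
proof -
  obtain a' where a': "a = f a'" "a' \<in> A" using a by (rule imageE)
  have "a' \<otimes> w = w \<otimes> a'" if w: "w \<in> W" for w
    using comm a' w A.mem_carrier W.mem_carrier f_inj_eq[of "a' \<otimes> w" "w \<otimes> a'"] by simp
  then have "a' = \<one>" using A_faithful_on_W a'(2) by blast
  then show ?thesis using a'(1) by simp
qed

lemma image_V_no_A_fixed_points:
  assumes v: "v \<in> f ` V" and comm: "\<forall>a\<in>f ` A. a \<otimes>\<^bsub>K\<^esub> v = v \<otimes>\<^bsub>K\<^esub> a"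
  shows "v = \<one>\<^bsub>K\<^esub>"
proof -
  obtain v' where v': "v = f v'" "v' \<in> V" using v by (rule imageE)
  have "a \<otimes> v' = v' \<otimes> a" if a: "a \<in> A" for a
    using comm v' a A.mem_carrier V.mem_carrier f_inj_eq[of "a \<otimes> v'" "v' \<otimes> a"] by simp
  then have "v' = \<one>" using V_no_A_fixed_points v'(2) by blast
  then show ?thesis using v'(1) by simp
qed

lemma image_uniserial_semidirect: "uniserial_semidirect K (f ` V) (f ` W) (f ` A) (f ` H)"
proof (intro uniserial_semidirect.intro uniserial_semidirect_axioms.intro)
  have inj: "inj_on f (carrier G)" and onto: "f ` carrier G = carrier K"
    using f_iso unfolding iso_def bij_betw_def by auto
  show "subgroup (f ` V) K" "subgroup (f ` W) K" "subgroup (f ` A) K" "subgroup (f ` H) K"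
    using subgroup_V subgroup_W subgroup_A subgroup_H by (auto intro: f.subgroup_img_is_subgroup)
  show "f ` W \<subset> f ` V"
    using image_strict_mono[OF inj_on_subset[OF inj V.subset] W_psubset_V] .
  show "f ` A \<inter> f ` V = {\<one>\<^bsub>K\<^esub>}"
    using A_Int_V inj_on_image_Int[OF inj A.subset V.subset] by simp
  show "f ` V <#>\<^bsub>K\<^esub> f ` A = carrier K"
    using set_mult_hom[OF f.homh V.subset A.subset] V_mult_A onto by simp
  show "f ` H = f ` W <#>\<^bsub>K\<^esub> f ` A"
    using set_mult_hom[OF f.homh W.subset A.subset] H_eq by simp
qed (use group_K image_W_nontrivial image_V_comm image_commutator_A_V image_A_transitive_on_W
       image_A_faithful_on_W image_V_no_A_fixed_points in auto)

end

section \<open>The group \<open>F\<^sub>2\<^sup>6/\<langle>(1,\<dots>,1)\<rangle> \<rtimes> A\<^sub>6\<close>\<close>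

lemma image_subset_if_permutes: "p permutes A \<Longrightarrow> S \<subseteq> A \<Longrightarrow> p ` S \<subseteq> A"
  using permutes_image image_mono by metis

text \<open>Vectors of \<open>F\<^sub>2\<^sup>6\<close> are subsets of \<open>{1..6}\<close>; a coset of the all-ones vector is a pair
  \<open>{Z, {1..6} - Z}\<close> and is represented by the member not containing 6.\<close>
definition compl_rep :: "nat set \<Rightarrow> nat set" where
  "compl_rep Z = (if 6 \<in> Z then {1..6} - Z else Z)"

definition perm_act :: "(nat \<Rightarrow> nat) \<Rightarrow> nat set \<Rightarrow> nat set" where
  "perm_act p S = compl_rep (p ` S)"

lemma compl_rep_subset: "Z \<subseteq> {1..6} \<Longrightarrow> compl_rep Z \<subseteq> {1..5}"
proof
  fix x assume "Z \<subseteq> {1..6}" and "x \<in> compl_rep Z"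
  then have "x \<in> {1..6}" "x \<noteq> 6" unfolding compl_rep_def by (auto split: if_splits)
  then show "x \<in> {1..5}" by auto
qed

lemma compl_rep_id: "Z \<subseteq> {1..5} \<Longrightarrow> compl_rep Z = Z"
  unfolding compl_rep_def by auto

lemma compl_rep_compl: "Z \<subseteq> {1..6} \<Longrightarrow> compl_rep ({1..6} - Z) = compl_rep Z"
  unfolding compl_rep_def by auto

lemma compl_rep_sym_diff:
  "Z \<subseteq> {1..6} \<Longrightarrow> Z' \<subseteq> {1..6} \<Longrightarrow>
    compl_rep (sym_diff Z Z') = compl_rep (sym_diff (compl_rep Z) (compl_rep Z'))"
  unfolding compl_rep_def by auto

lemma compl_rep_image:
  assumes p: "p permutes {1..6}" and Z: "Z \<subseteq> {1..6}"
  shows "compl_rep (p ` compl_rep Z) = compl_rep (p ` Z)"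
proof (cases "6 \<in> Z")
  case True
  have "p ` ({1..6} - Z) = {1..6} - p ` Z"
    using p by (metis permutes_image permutes_inj image_set_diff)
  moreover have "p ` Z \<subseteq> {1..6}" using p Z by (rule image_subset_if_permutes)
  ultimately show ?thesis using True compl_rep_compl[of "p ` Z"] by (simp add: compl_rep_def[of Z])
qed (simp add: compl_rep_def)

lemma perm_act_subset: "p permutes {1..6} \<Longrightarrow> S \<subseteq> {1..6} \<Longrightarrow> perm_act p S \<subseteq> {1..5}"
  unfolding perm_act_def by (intro compl_rep_subset image_subset_if_permutes)

lemma perm_act_id: "S \<subseteq> {1..5} \<Longrightarrow> perm_act id S = S"
  by (simp add: perm_act_def compl_rep_id)

lemma perm_act_empty [simp]: "perm_act p {} = {}"
  by (simp add: perm_act_def compl_rep_def)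

lemma perm_act_comp:
  assumes "p permutes {1..6}" "q permutes {1..6}" "S \<subseteq> {1..6}"
  shows "perm_act p (perm_act q S) = perm_act (p \<circ> q) S"
  unfolding perm_act_def image_comp[symmetric]
  using compl_rep_image[OF assms(1) image_subset_if_permutes[OF assms(2,3)]] .

lemma perm_act_sym_diff:
  assumes p: "p permutes {1..6}" and S: "S \<subseteq> {1..6}" and T: "T \<subseteq> {1..6}"
  shows "perm_act p (sym_diff S T) = sym_diff (perm_act p S) (perm_act p T)"
proof -
  have "perm_act p (sym_diff S T) = compl_rep (sym_diff (p ` S) (p ` T))"
    using permutes_inj[OF p] by (simp add: perm_act_def image_Un image_set_diff)
  also have "\<dots> = compl_rep (sym_diff (perm_act p S) (perm_act p T))"
    unfolding perm_act_def
    by (rule compl_rep_sym_diff[OF image_subset_if_permutes[OF p S] image_subset_if_permutes[OF p T]])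
  also have "\<dots> = sym_diff (perm_act p S) (perm_act p T)"
    using perm_act_subset[OF p S] perm_act_subset[OF p T] by (intro compl_rep_id) auto
  finally show ?thesis .
qed

lemma even_card_sym_diff:
  assumes "finite S" "finite T"
  shows "even (card (sym_diff S T)) \<longleftrightarrow> (even (card S) \<longleftrightarrow> even (card T))"
proof -
  have "card (sym_diff S T) = card (S - T) + card (T - S)"
    using assms by (intro card_Un_disjoint) auto
  moreover have "card S = card (S \<inter> T) + card (S - T)" "card T = card (T \<inter> S) + card (T - S)"
    using assms card_Int_Diff by blast+
  ultimately have "card (sym_diff S T) + 2 * card (S \<inter> T) = card S + card T"
    by (simp add: Int_commute)
  then have "even (card (sym_diff S T) + 2 * card (S \<inter> T)) \<longleftrightarrow> even (card S + card T)"
    by (rule arg_cong)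
  then show ?thesis by simp
qed

lemma even_card_perm_act:
  assumes p: "p permutes {1..6}" and S: "S \<subseteq> {1..6}"
  shows "even (card (perm_act p S)) \<longleftrightarrow> even (card S)"
proof -
  have card_image: "card (p ` S) = card S"
    using permutes_inj[OF p] by (simp add: card_image inj_on_subset)
  have "p ` S \<subseteq> {1..6}" using p S by (rule image_subset_if_permutes)
  then have "card ({1..6} - p ` S) = 6 - card S"
    using card_image by (simp add: card_Diff_subset finite_subset)
  moreover have "card S \<le> 6" using card_mono[OF _ S] by simp
  then have "even (6 - card S) \<longleftrightarrow> even (card S)" by presburger
  ultimately show ?thesis
    using card_image by (cases "6 \<in> p ` S") (simp_all add: perm_act_def compl_rep_def)
qed

lemma alt6_permutes: "p \<in> carrier (alt_group 6) \<Longrightarrow> p permutes {1..6}"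
  by (simp add: alt_group_carrier)

lemma alt6_comp:
  "p \<in> carrier (alt_group 6) \<Longrightarrow> q \<in> carrier (alt_group 6) \<Longrightarrow> p \<circ> q \<in> carrier (alt_group 6)"
  by (auto simp: alt_group_carrier permutes_compose evenperm_comp
      permutes_imp_permutation[OF finite_atLeastAtMost])

lemma alt6_id: "id \<in> carrier (alt_group 6)"
  by (simp add: alt_group_carrier permutes_id)

lemma alt6_to_1_2:
  assumes a: "a \<in> {1..6}" and b: "b \<in> {1..6}" and "a \<noteq> b"
  shows "\<exists>p\<in>carrier (alt_group 6). p a = 1 \<and> p b = 2"
proof -
  define \<rho> where "\<rho> = transpose 2 (transpose 1 a b) \<circ> transpose 1 a"
  have \<rho>_permutes: "\<rho> permutes {1..6}"
    unfolding \<rho>_def using a b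
    by (intro permutes_compose permutes_swap_id) (auto simp: transpose_def)
  have \<rho>_values: "\<rho> a = 1" "\<rho> b = 2"
    unfolding \<rho>_def using \<open>a \<noteq> b\<close> by (auto simp: transpose_def)
  \<comment> \<open>composing with \<open>(3 4)\<close> fixes the parity without moving 1 and 2\<close>
  define \<sigma> where "\<sigma> = (if evenperm \<rho> then \<rho> else transpose 3 4 \<circ> \<rho>)"
  have "\<sigma> permutes {1..6}"
    using permutes_compose[OF \<rho>_permutes permutes_swap_id[of 3 "{1..6}" 4]] \<rho>_permutes
    by (simp add: \<sigma>_def)
  moreover have "evenperm \<sigma>"
    using permutes_imp_permutation[OF finite_atLeastAtMost \<rho>_permutes]
    by (simp add: \<sigma>_def evenperm_comp evenperm_swap permutation_swap_id)
  moreover have "\<sigma> a = 1" "\<sigma> b = 2"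
    unfolding \<sigma>_def using \<rho>_values by auto
  ultimately show ?thesis by (auto simp: alt_group_carrier)
qed

lemma alt6_two_transitive:
  assumes "a \<in> {1..6}" "b \<in> {1..6}" "a \<noteq> b" "c \<in> {1..6}" "d \<in> {1..6}" "c \<noteq> d"
  shows "\<exists>p\<in>carrier (alt_group 6). p a = c \<and> p b = d"
proof -
  obtain p where p: "p \<in> carrier (alt_group 6)" "p a = 1" "p b = 2"
    using alt6_to_1_2[OF assms(1-3)] by blast
  obtain q where q: "q \<in> carrier (alt_group 6)" "q c = 1" "q d = 2"
    using alt6_to_1_2[OF assms(4-6)] by blast
  have "inv' q 1 = c" "inv' q 2 = d"
    using q permutes_inverses(2)[OF alt6_permutes[OF q(1)]] by metis+
  then show ?thesis
    using p alt6_comp[OF alt_group_inv_closed[OF q(1)] p(1)] by (intro bexI[of _ "inv' q \<circ> p"]) auto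
qed

lemma perm_act_1_2_onto:
  assumes S: "S \<subseteq> {1..5}" "even (card S)" "S \<noteq> {}"
  shows "\<exists>p\<in>carrier (alt_group 6). perm_act p {1, 2} = S"
proof -
  have "finite S" using S(1) finite_subset by blast
  then have "card S \<noteq> 0" using S(3) by simp
  moreover have "card S \<le> 5" using card_mono[OF _ S(1)] by simp
  ultimately have "card S = 2 \<or> card S = 4" using S(2) by presburger
  then show ?thesis
  proof
    assume "card S = 2"
    then obtain a b where ab: "S = {a, b}" "a \<noteq> b" by (meson card_2_iff)
    obtain p where p: "p \<in> carrier (alt_group 6)" "p 1 = a" "p 2 = b"
      using alt6_two_transitive[of 1 2 a b] ab S(1) by auto
    have "perm_act p {1, 2} = S" using p ab S(1) by (auto simp: perm_act_def compl_rep_def)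
    then show ?thesis using p(1) by blast
  next
    assume "card S = 4"
    \<comment> \<open>then \<open>S\<close> represents the class of \<open>{c, 6}\<close> for the missing point \<open>c\<close>\<close>
    then have "card ({1..5} - S) = 1" using card_Diff_subset[OF \<open>finite S\<close> S(1)] by simp
    then obtain c where c: "{1..5} - S = {c}" by (meson card_1_singletonE)
    then have "c \<in> {1..5}" by blast
    then obtain p where p: "p \<in> carrier (alt_group 6)" "p 1 = c" "p 2 = 6"
      using alt6_two_transitive[of 1 2 c 6] by auto
    have "perm_act p {1, 2} = {1..6} - {c, 6}" using p by (simp add: perm_act_def compl_rep_def)
    also have "\<dots> = S" using c S(1) by auto
    finally show ?thesis using p(1) by blast
  qed
qed

lemma perm_act_transitive:
  assumes "S \<subseteq> {1..5}" "even (card S)" "S \<noteq> {}" "T \<subseteq> {1..5}" "even (card T)" "T \<noteq> {}"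
  shows "\<exists>p\<in>carrier (alt_group 6). perm_act p S = T"
proof -
  obtain p where p: "p \<in> carrier (alt_group 6)" "perm_act p {1, 2} = S"
    using perm_act_1_2_onto[OF assms(1-3)] by blast
  obtain q where q: "q \<in> carrier (alt_group 6)" "perm_act q {1, 2} = T"
    using perm_act_1_2_onto[OF assms(4-6)] by blast
  have p_perm: "p permutes {1..6}" and q_perm: "q permutes {1..6}"
    using p q alt6_permutes by auto
  have "perm_act (inv' p) S = perm_act (inv' p \<circ> p) {1, 2}"
    unfolding p(2)[symmetric] by (rule perm_act_comp[OF permutes_inv[OF p_perm] p_perm]) simp
  then have "perm_act (inv' p) S = {1, 2}"
    by (simp add: permutes_inv_o(2)[OF p_perm] perm_act_id)
  moreover have "perm_act (q \<circ> inv' p) S = perm_act q (perm_act (inv' p) S)"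
    using assms(1) by (intro perm_act_comp[symmetric] q_perm permutes_inv[OF p_perm]) auto
  ultimately have "perm_act (q \<circ> inv' p) S = T" using q(2) by simp
  then show ?thesis using alt6_comp[OF q(1) alt_group_inv_closed[OF p(1)]] by blast
qed

lemma perm_act_pair_fixed:
  assumes p: "p permutes {1..6}" and ij: "i \<in> {1..5}" "j \<in> {1..5}" "i \<noteq> j"
    and fixed: "perm_act p {i, j} = {i, j}"
  shows "p ` {i, j} = {i, j}"
proof (cases "6 \<in> p ` {i, j}")
  case True
  have "card (p ` {i, j}) = 2" using permutes_inj[OF p] ij by (simp add: inj_eq)
  moreover have "p ` {i, j} \<subseteq> {1..6}" by (rule image_subset_if_permutes[OF p]) (use ij in auto)
  ultimately have "card ({1..6} - p ` {i, j}) = 4" by (simp add: card_Diff_subset finite_subset)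
  moreover have "perm_act p {i, j} = {1..6} - p ` {i, j}"
    using True by (simp add: perm_act_def compl_rep_def)
  ultimately have "card {i, j} = 4" using fixed by simp
  then show ?thesis using ij by simp
next
  case False
  then show ?thesis using fixed by (simp add: perm_act_def compl_rep_def)
qed

lemma perm_act_faithful:
  assumes p: "p \<in> carrier (alt_group 6)"
    and fixed: "\<And>S. S \<subseteq> {1..5} \<Longrightarrow> even (card S) \<Longrightarrow> perm_act p S = S"
  shows "p = id"
proof -
  have p_perm: "p permutes {1..6}" using alt6_permutes[OF p] .
  have fixes_1_5: "p i = i" if i: "i \<in> {1..5}" for i
  proof -
    have "\<exists>j\<in>{1..5}. \<exists>k\<in>{1..5}. i \<noteq> j \<and> i \<noteq> k \<and> j \<noteq> k"
    proof (cases "i \<le> 2")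
      case True
      then show ?thesis by (intro bexI[of _ 3] bexI[of _ 4]) auto
    next
      case False
      then show ?thesis by (intro bexI[of _ 1] bexI[of _ 2]) auto
    qed
    then obtain j k where jk: "j \<in> {1..5}" "k \<in> {1..5}" "i \<noteq> j" "i \<noteq> k" "j \<noteq> k" by blast
    have "p ` {i, j} = {i, j}" "p ` {i, k} = {i, k}"
      using perm_act_pair_fixed[OF p_perm] fixed i jk by auto
    then have "p i \<in> {i, j} \<inter> {i, k}" by blast
    then show "p i = i" using jk by auto
  qed
  have "p 6 \<notin> {1..5}"
  proof
    assume in_1_5: "p 6 \<in> {1..5}"
    then have "p (p 6) = p 6" using fixes_1_5 by blast
    then have "p 6 = 6" using permutes_inj[OF p_perm] by (meson injD)
    then show False using in_1_5 by simp
  qed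
  moreover have "p 6 \<in> {1..6}" using permutes_in_image[OF p_perm] by simp
  ultimately have fixes_6: "p 6 = 6" by auto
  show "p = id"
  proof
    fix x
    show "p x = id x"
      using fixes_1_5 fixes_6 permutes_not_in[OF p_perm] by (cases "x \<in> {1..5}"; cases "x = 6") auto
  qed
qed

lemma perm_act_no_fixed_points:
  assumes S: "S \<subseteq> {1..5}" and fixed: "\<And>p. p \<in> carrier (alt_group 6) \<Longrightarrow> perm_act p S = S"
  shows "S = {}"
proof (rule ccontr)
  assume "S \<noteq> {}"
  then obtain i where i: "i \<in> S" by blast
  show False
  proof (cases "S = {1..5}")
    case True
    obtain p where p: "p \<in> carrier (alt_group 6)" "p 1 = 6" "p 6 = 1"
      using alt6_two_transitive[of 1 6 6 1] by auto
    have p_perm: "p permutes {1..6}" using alt6_permutes[OF p(1)] .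
    have "{1..6::nat} = insert 6 {1..5}" by auto
    then have "insert 1 (p ` {1..5}) = {1..6}"
      using p(3) permutes_image[OF p_perm] by (metis image_insert)
    then have "2 \<in> insert 1 (p ` {1..5})" by simp
    then have "2 \<in> p ` {1..5}" by simp
    moreover have "6 \<in> p ` {1..5}" using p(2) by force
    ultimately have "2 \<notin> perm_act p {1..5}" by (simp add: perm_act_def compl_rep_def)
    then show False using fixed[OF p(1)] True by simp
  next
    case False
    then obtain j where j: "j \<in> {1..5}" "j \<notin> S" using S by blast
    have "i \<in> {1..5}" using i S by blast
    then obtain p where p: "p \<in> carrier (alt_group 6)" "p i = j" "p 6 = 6"
      using alt6_two_transitive[of i 6 j 6] j by auto
    have "6 \<notin> p ` S"
    proof
      assume "6 \<in> p ` S"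
      then obtain y where "y \<in> S" "p y = p 6" using p(3) by auto
      then show False
        using permutes_inj[OF alt6_permutes[OF p(1)]] S by (auto dest: injD)
    qed
    moreover have "j \<in> p ` S" using i p(2) by blast
    ultimately have "j \<in> perm_act p S" by (simp add: perm_act_def compl_rep_def)
    then show False using fixed[OF p(1)] j by simp
  qed
qed

lemma perm_act_closed:
  assumes "p \<in> carrier (alt_group 6)" and "S \<subseteq> {1..5}"
  shows "perm_act p S \<subseteq> {1..5}"
proof (rule perm_act_subset[OF alt6_permutes[OF assms(1)]])
  show "S \<subseteq> {1..6}" using assms(2) by auto
qed

lemma even_card_sym_diff_perm_act:
  assumes p: "p \<in> carrier (alt_group 6)" and S: "S \<subseteq> {1..5}" and T: "T \<subseteq> {1..5}"
  shows "even (card (sym_diff S (perm_act p T))) \<longleftrightarrow> (even (card S) \<longleftrightarrow> even (card T))"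
proof -
  have "T \<subseteq> {1..6}" using T by auto
  then have "even (card (perm_act p T)) \<longleftrightarrow> even (card T)"
    by (rule even_card_perm_act[OF alt6_permutes[OF p]])
  moreover have "finite S" using S by (rule finite_subset) simp
  moreover have "finite (perm_act p T)" using perm_act_closed[OF p T] by (rule finite_subset) simp
  ultimately show ?thesis by (simp add: even_card_sym_diff)
qed

definition VA6 :: "(nat set \<times> (nat \<Rightarrow> nat)) monoid" where
  "VA6 = \<lparr>carrier = Pow {1..5} \<times> carrier (alt_group 6),
     monoid.mult = (\<lambda>(S, p) (T, q). (sym_diff S (perm_act p T), p \<circ> q)),
     one = ({}, id)\<rparr>"

lemma VA6_simps [simp]:
  "carrier VA6 = Pow {1..5} \<times> carrier (alt_group 6)"
  "(S, p) \<otimes>\<^bsub>VA6\<^esub> (T, q) = (sym_diff S (perm_act p T), p \<circ> q)"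
  "\<one>\<^bsub>VA6\<^esub> = ({}, id)"
  by (simp_all add: VA6_def)

lemma group_VA6: "group VA6"
proof (rule groupI)
  fix x y assume "x \<in> carrier VA6" "y \<in> carrier VA6"
  then obtain S p T q where "x = (S, p)" "y = (T, q)" "S \<subseteq> {1..5}" "T \<subseteq> {1..5}"
    "p \<in> carrier (alt_group 6)" "q \<in> carrier (alt_group 6)" by auto
  moreover have "perm_act p T \<subseteq> {1..5}" using calculation by (intro perm_act_closed) auto
  ultimately show "x \<otimes>\<^bsub>VA6\<^esub> y \<in> carrier VA6" using alt6_comp by auto
next
  show "\<one>\<^bsub>VA6\<^esub> \<in> carrier VA6" using alt6_id by simp
next
  fix x y z assume "x \<in> carrier VA6" "y \<in> carrier VA6" "z \<in> carrier VA6"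
  then obtain S p T q R r where xyz: "x = (S, p)" "y = (T, q)" "z = (R, r)"
    "T \<subseteq> {1..5}" "R \<subseteq> {1..5}" "p \<in> carrier (alt_group 6)" "q \<in> carrier (alt_group 6)"
    by auto
  have subsets: "T \<subseteq> {1..6}" "R \<subseteq> {1..6}" "perm_act q R \<subseteq> {1..6}"
    using xyz perm_act_closed[of q R] by auto
  have "perm_act p (sym_diff T (perm_act q R)) = sym_diff (perm_act p T) (perm_act p (perm_act q R))"
    by (rule perm_act_sym_diff[OF alt6_permutes[OF xyz(6)] subsets(1,3)])
  also have "perm_act p (perm_act q R) = perm_act (p \<circ> q) R"
    by (rule perm_act_comp[OF alt6_permutes[OF xyz(6)] alt6_permutes[OF xyz(7)] subsets(2)])
  finally show "x \<otimes>\<^bsub>VA6\<^esub> y \<otimes>\<^bsub>VA6\<^esub> z = x \<otimes>\<^bsub>VA6\<^esub> (y \<otimes>\<^bsub>VA6\<^esub> z)"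
    using xyz by (auto simp: comp_assoc)
next
  fix x assume "x \<in> carrier VA6"
  then obtain S p where x: "x = (S, p)" "S \<subseteq> {1..5}" "p \<in> carrier (alt_group 6)" by auto
  then show "\<one>\<^bsub>VA6\<^esub> \<otimes>\<^bsub>VA6\<^esub> x = x" by (simp add: perm_act_id)
  let ?y = "(perm_act (inv' p) S, inv' p)"
  have "?y \<in> carrier VA6"
    using x perm_act_closed alt_group_inv_closed by auto
  moreover have "?y \<otimes>\<^bsub>VA6\<^esub> x = \<one>\<^bsub>VA6\<^esub>"
    using x by (simp add: permutes_inv_o(2)[OF alt6_permutes])
  ultimately show "\<exists>y\<in>carrier VA6. y \<otimes>\<^bsub>VA6\<^esub> x = \<one>\<^bsub>VA6\<^esub>" by blast
qed

lemma finite_VA6: "finite (carrier VA6)"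
proof -
  have "carrier (alt_group 6) \<subseteq> {p. p permutes {1..6}}" by (auto simp: alt_group_carrier)
  then have "finite (carrier (alt_group 6))"
    using finite_permutations[of "{1..6::nat}"] finite_subset by blast
  then show ?thesis by simp
qed

lemma inv_VA6:
  assumes "S \<subseteq> {1..5}" "p \<in> carrier (alt_group 6)"
  shows "inv\<^bsub>VA6\<^esub> (S, p) = (perm_act (inv' p) S, inv' p)"
proof (rule group.inv_equality[OF group_VA6])
  show "(perm_act (inv' p) S, inv' p) \<otimes>\<^bsub>VA6\<^esub> (S, p) = \<one>\<^bsub>VA6\<^esub>"
    using assms by (simp add: permutes_inv_o(2)[OF alt6_permutes])
  show "(perm_act (inv' p) S, inv' p) \<in> carrier VA6"
    using assms perm_act_closed alt_group_inv_closed by auto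
qed (use assms in simp)

definition C2 :: "nat monoid" where
  "C2 = \<lparr>carrier = {0, 1}, monoid.mult = (\<lambda>x y. (x + y) mod 2), one = 0\<rparr>"

lemma C2_simps [simp]: "carrier C2 = {0, 1}" "x \<otimes>\<^bsub>C2\<^esub> y = (x + y) mod 2" "\<one>\<^bsub>C2\<^esub> = 0"
  by (simp_all add: C2_def)

lemma group_C2: "group C2"
proof (rule groupI)
  fix x assume "x \<in> carrier C2"
  then show "\<exists>y\<in>carrier C2. y \<otimes>\<^bsub>C2\<^esub> x = \<one>\<^bsub>C2\<^esub>" by (intro bexI[of _ x]) auto
qed auto

lemma cyclic_C2: "cyclic_group C2"
proof -
  define h where "h = (\<lambda>i::int. if even i then 0 else 1 :: nat)"
  have "h \<in> hom integer_group C2" unfolding h_def hom_def integer_group_def by auto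
  moreover have "h ` carrier integer_group = carrier C2"
  proof
    show "h ` carrier integer_group \<subseteq> carrier C2" unfolding h_def by auto
    have "h 0 = 0" "h 1 = 1" unfolding h_def by simp_all
    then show "carrier C2 \<subseteq> h ` carrier integer_group"
      unfolding integer_group_def using rangeI[of h 0] rangeI[of h 1] by auto
  qed
  ultimately have "h \<in> epi integer_group C2" unfolding epi_def by blast
  then show ?thesis
    using group.cyclic_group_epimorphic_image[OF group_integer_group] cyclic_integer_group group_C2
    by blast
qed

lemma U_cls_C2: "U_cls C2"
  unfolding U_cls_def using group_C2 cyclic_imp_supersoluble[OF group_C2 cyclic_C2] by simp

definition V6 :: "(nat set \<times> (nat \<Rightarrow> nat)) set" where
  "V6 = Pow {1..5} \<times> {id}"

definition W6 :: "(nat set \<times> (nat \<Rightarrow> nat)) set" where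
  "W6 = {S. S \<subseteq> {1..5} \<and> even (card S)} \<times> {id}"

definition A6 :: "(nat set \<times> (nat \<Rightarrow> nat)) set" where
  "A6 = {{}} \<times> carrier (alt_group 6)"

definition H6 :: "(nat set \<times> (nat \<Rightarrow> nat)) set" where
  "H6 = {S. S \<subseteq> {1..5} \<and> even (card S)} \<times> carrier (alt_group 6)"

definition parity :: "nat set \<times> (nat \<Rightarrow> nat) \<Rightarrow> nat" where
  "parity x = (if even (card (fst x)) then 0 else 1)"

lemma group_hom_parity: "group_hom VA6 C2 parity"
proof -
  have "parity \<in> hom VA6 C2"
  proof (rule homI)
    show "parity x \<in> carrier C2" for x by (simp add: parity_def)
    show "parity (x \<otimes>\<^bsub>VA6\<^esub> y) = parity x \<otimes>\<^bsub>C2\<^esub> parity y"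
      if carriers: "x \<in> carrier VA6" "y \<in> carrier VA6" for x y
    proof -
      obtain S p T q where xy: "x = (S, p)" "y = (T, q)" "S \<subseteq> {1..5}" "T \<subseteq> {1..5}"
        "p \<in> carrier (alt_group 6)" using carriers by auto
      then show ?thesis using even_card_sym_diff_perm_act[OF xy(5,3,4)] by (simp add: parity_def)
    qed
  qed
  then show ?thesis
    using group_VA6 group_C2 unfolding group_hom_def group_hom_axioms_def by blast
qed

lemma parity_onto: "parity ` carrier VA6 = carrier C2"
proof
  show "parity ` carrier VA6 \<subseteq> carrier C2" by (auto simp: parity_def)
  have "0 \<in> parity ` carrier VA6"
    by (rule rev_image_eqI[of "({}, id)"]) (simp_all add: parity_def alt6_id)
  moreover have "1 \<in> parity ` carrier VA6"
    by (rule rev_image_eqI[of "({1}, id)"]) (simp_all add: parity_def alt6_id)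
  ultimately show "carrier C2 \<subseteq> parity ` carrier VA6" by auto
qed

lemma kernel_parity: "kernel VA6 C2 parity = H6"
  unfolding kernel_def H6_def parity_def by auto

lemma group_hom_snd: "group_hom VA6 (alt_group 6) snd"
  using group_VA6 alt_group_is_group
  unfolding group_hom_def group_hom_axioms_def hom_def by (auto simp: alt_group_mult)

lemma kernel_snd: "kernel VA6 (alt_group 6) snd = V6"
  unfolding kernel_def V6_def by (auto simp: alt_group_one alt6_id)

lemma group_hom_alt6_VA6: "group_hom (alt_group 6) VA6 (\<lambda>p. ({}, p))"
  using group_VA6 alt_group_is_group
  unfolding group_hom_def group_hom_axioms_def hom_def by (auto simp: alt_group_mult)

lemma image_alt6_VA6: "(\<lambda>p. ({}, p)) ` carrier (alt_group 6) = A6"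
  unfolding A6_def by auto

lemma not_solvable_VA6: "\<not> solvable VA6"
proof
  assume "solvable VA6"
  moreover have "inj_on (\<lambda>p. ({}, p)) (carrier (alt_group 6))" by (auto intro: inj_onI)
  ultimately have "solvable (alt_group 6)"
    using group_hom.inj_hom_imp_solvable[OF group_hom_alt6_VA6] by blast
  then show False using alt_group_is_unsolvable[of 6] by simp
qed

lemma conj_alt6_VA6:
  assumes "p \<in> carrier (alt_group 6)" "S \<subseteq> {1..5}"
  shows "({}, p) \<otimes>\<^bsub>VA6\<^esub> (S, id) \<otimes>\<^bsub>VA6\<^esub> inv\<^bsub>VA6\<^esub> ({}, p) = (perm_act p S, id)"
  using assms by (simp add: inv_VA6 permutes_inv_o(1)[OF alt6_permutes])

lemma subgroups_VA6:
  "subgroup V6 VA6" "subgroup W6 VA6" "subgroup A6 VA6" "subgroup H6 VA6"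
proof -
  show V: "subgroup V6 VA6"
    using normal_imp_subgroup[OF group_hom.normal_kernel[OF group_hom_snd]] kernel_snd by simp
  show H: "subgroup H6 VA6"
    using normal_imp_subgroup[OF group_hom.normal_kernel[OF group_hom_parity]] kernel_parity by simp
  have "W6 = V6 \<inter> H6" by (auto simp: V6_def W6_def H6_def alt6_id)
  then show "subgroup W6 VA6" using group.subgroups_Inter_pair[OF group_VA6 V H] by simp
  show "subgroup A6 VA6"
    using group_hom.img_is_subgroup[OF group_hom_alt6_VA6] image_alt6_VA6 by simp
qed

lemma set_mult_A6:
  assumes "P \<subseteq> Pow {1..5}"
  shows "(P \<times> {id}) <#>\<^bsub>VA6\<^esub> A6 = P \<times> carrier (alt_group 6)"
proof
  show "(P \<times> {id}) <#>\<^bsub>VA6\<^esub> A6 \<subseteq> P \<times> carrier (alt_group 6)"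
    by (auto simp: set_mult_def A6_def)
  show "P \<times> carrier (alt_group 6) \<subseteq> (P \<times> {id}) <#>\<^bsub>VA6\<^esub> A6"
  proof
    fix x assume "x \<in> P \<times> carrier (alt_group 6)"
    then obtain S p where "x = (S, p)" "S \<in> P" "p \<in> carrier (alt_group 6)" by blast
    then have "x = (S, id) \<otimes>\<^bsub>VA6\<^esub> ({}, p)" "(S, id) \<in> P \<times> {id}" "({}, p) \<in> A6"
      using assms by (auto simp: A6_def perm_act_id)
    then show "x \<in> (P \<times> {id}) <#>\<^bsub>VA6\<^esub> A6" unfolding set_mult_def by blast
  qed
qed

lemma commutator_A6_V6:
  assumes "a \<in> A6" "v \<in> V6"
  shows "a \<otimes>\<^bsub>VA6\<^esub> v \<otimes>\<^bsub>VA6\<^esub> inv\<^bsub>VA6\<^esub> a \<otimes>\<^bsub>VA6\<^esub> inv\<^bsub>VA6\<^esub> v \<in> W6"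
proof -
  obtain p S where pS: "a = ({}, p)" "v = (S, id)" "p \<in> carrier (alt_group 6)" "S \<subseteq> {1..5}"
    using assms by (auto simp: A6_def V6_def)
  have "sym_diff (perm_act p S) S = sym_diff S (perm_act p S)" by blast
  then have "even (card (sym_diff (perm_act p S) S))"
    using even_card_sym_diff_perm_act[OF pS(3,4,4)] by simp
  moreover have "sym_diff (perm_act p S) S \<subseteq> {1..5}" using pS perm_act_closed[of p S] by auto
  ultimately show ?thesis
    using pS conj_alt6_VA6 by (simp add: W6_def inv_VA6 perm_act_id alt6_id)
qed

lemma A6_transitive_on_W6:
  assumes "w \<in> W6" "u \<in> W6" "w \<noteq> \<one>\<^bsub>VA6\<^esub>" "u \<noteq> \<one>\<^bsub>VA6\<^esub>"
  shows "\<exists>a\<in>A6. a \<otimes>\<^bsub>VA6\<^esub> w \<otimes>\<^bsub>VA6\<^esub> inv\<^bsub>VA6\<^esub> a = u"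
proof -
  obtain S T where ST: "w = (S, id)" "u = (T, id)" "S \<subseteq> {1..5}" "T \<subseteq> {1..5}"
    "even (card S)" "even (card T)" using assms(1,2) by (auto simp: W6_def)
  then have "S \<noteq> {}" "T \<noteq> {}" using assms(3,4) by auto
  then obtain p where "p \<in> carrier (alt_group 6)" "perm_act p S = T"
    using perm_act_transitive ST by blast
  then show ?thesis using ST conj_alt6_VA6 by (intro bexI[of _ "({}, p)"]) (auto simp: A6_def)
qed

lemma A6_faithful_on_W6:
  assumes a: "a \<in> A6" and comm: "\<forall>w\<in>W6. a \<otimes>\<^bsub>VA6\<^esub> w = w \<otimes>\<^bsub>VA6\<^esub> a"
  shows "a = \<one>\<^bsub>VA6\<^esub>"
proof -
  obtain p where p: "a = ({}, p)" "p \<in> carrier (alt_group 6)" using a by (auto simp: A6_def)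
  have "perm_act p S = S" if "S \<subseteq> {1..5}" "even (card S)" for S
    using comm p that by (auto simp: W6_def)
  then have "p = id" by (rule perm_act_faithful[OF p(2)])
  then show ?thesis using p(1) by simp
qed

lemma V6_no_A6_fixed_points:
  assumes v: "v \<in> V6" and comm: "\<forall>a\<in>A6. a \<otimes>\<^bsub>VA6\<^esub> v = v \<otimes>\<^bsub>VA6\<^esub> a"
  shows "v = \<one>\<^bsub>VA6\<^esub>"
proof -
  obtain S where S: "v = (S, id)" "S \<subseteq> {1..5}" using v by (auto simp: V6_def)
  have "perm_act p S = S" if "p \<in> carrier (alt_group 6)" for p
    using comm S that by (auto simp: A6_def perm_act_id)
  then have "S = {}" by (rule perm_act_no_fixed_points[OF S(2)])
  then show ?thesis using S(1) by simp
qed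

lemma uniserial_semidirect_VA6: "uniserial_semidirect VA6 V6 W6 A6 H6"
proof (intro uniserial_semidirect.intro uniserial_semidirect_axioms.intro)
  have "W6 \<subseteq> V6" "({1}, id) \<in> V6 - W6" by (auto simp: V6_def W6_def)
  then show "W6 \<subset> V6" by blast
  have "({1, 2}, id) \<in> W6" by (simp add: W6_def)
  then show "W6 \<noteq> {\<one>\<^bsub>VA6\<^esub>}"
    by (metis VA6_simps(3) prod.inject singletonD insert_not_empty)
  show "x \<otimes>\<^bsub>VA6\<^esub> y = y \<otimes>\<^bsub>VA6\<^esub> x" if "x \<in> V6" "y \<in> V6" for x y
    using that by (auto simp: V6_def perm_act_id)
  show "A6 \<inter> V6 = {\<one>\<^bsub>VA6\<^esub>}" by (auto simp: A6_def V6_def alt6_id)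
  show "V6 <#>\<^bsub>VA6\<^esub> A6 = carrier VA6" using set_mult_A6[of "Pow {1..5}"] by (simp add: V6_def)
  show "H6 = W6 <#>\<^bsub>VA6\<^esub> A6"
    using set_mult_A6[of "{S. S \<subseteq> {1..5} \<and> even (card S)}"] by (auto simp: W6_def H6_def)
qed (use group_VA6 subgroups_VA6 commutator_A6_V6 A6_transitive_on_W6 A6_faithful_on_W6
       V6_no_A6_fixed_points in auto)

lemma counterexample_exists_if_C2:
  assumes C2: "F C2" and soluble: "\<And>K. F K \<Longrightarrow> group K \<and> solvable K"
  shows "counterexample_exists F"
proof -
  obtain f and K :: grp where K: "group K" "finite (carrier K)" and f: "f \<in> iso VA6 K"
    by (rule group.iso_nat_group[OF group_VA6 finite_VA6])
  interpret VA6: uniserial_semidirect_iso VA6 V6 W6 A6 H6 f K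
    by (intro uniserial_semidirect_iso.intro uniserial_semidirect_iso_axioms.intro
        uniserial_semidirect_VA6 f K(1))
  interpret K: uniserial_semidirect K "f ` V6" "f ` W6" "f ` A6" "f ` H6"
    by (rule VA6.image_uniserial_semidirect)
  have H_normal: "f ` H6 \<lhd> K" and quotient: "K Mod (f ` H6) \<cong> C2"
    using iso_FactGroup_kernel[OF group_hom_parity parity_onto f K(1)] kernel_parity by auto
  have not_solvable: "\<not> solvable K"
    using not_solvable_VA6 iso_solvable[OF _ group_VA6 K(1)] f unfolding is_iso_def by blast
  have "\<not> in_cls F K"
  proof
    assume "in_cls F K"
    then obtain L where "F L" "K \<cong> L" unfolding in_cls_def by blast
    then show False using iso_solvable[OF _ K(1)] soluble not_solvable by blast
  qed
  moreover have "in_cls F (K Mod f ` H6)" unfolding in_cls_def using C2 quotient by blast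
  moreover have "\<forall>M. maxsub K M \<longrightarrow> (let T = tildeF (K\<lparr>carrier := f ` H6\<rparr>) in
      card T div card (T \<inter> M) = 1 \<or> Factorial_Ring.prime (card T div card (T \<inter> M)))"
    using K.tildeF_H_index_one[OF K(2)] by (simp add: Let_def)
  ultimately show ?thesis unfolding counterexample_exists_def using K H_normal by blast
qed

theorem theorem1:
  shows "(\<forall>F. formation F \<and> saturated F \<and> (\<forall>K. F K \<longrightarrow> solvable K) \<and>
              (\<forall>K. U_cls K \<longrightarrow> F K) \<longrightarrow> counterexample_exists F)
         \<and> counterexample_exists U_cls"
proof (intro conjI allI impI)
  fix F
  assume F: "formation F \<and> saturated F \<and> (\<forall>K. F K \<longrightarrow> solvable K) \<and> (\<forall>K. U_cls K \<longrightarrow> F K)"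
  show "counterexample_exists F"
  proof (rule counterexample_exists_if_C2)
    show "F C2" using F U_cls_C2 by blast
    show "group K \<and> solvable K" if "F K" for K
      using F that unfolding formation_def group_class_def by blast
  qed
next
  show "counterexample_exists U_cls"
    using U_cls_C2 supersoluble_imp_solvable
    by (intro counterexample_exists_if_C2) (auto simp: U_cls_def)
qed

end
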